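(* Let $\Lambda=[\mu_1,L_1]\cup[\mu_2,L_2]$ with $0<\mu_1<L_1\le\mu_2<L_2$ and $L_1-\mu_1=L_2-\mu_2$, and set $\rho=\frac{L_2+\mu_1}{L_2-\mu_1}$, $R=\frac{\mu_2-L_1}{L_2-\mu_1}$. Let $$m=\left(\frac{\sqrt{\rho^2-R^2}-\sqrt{\rho^2-1}}{\sqrt{1-R^2}}\right)^2,\quad h_0=\frac{1+m}{L_1},\quad h_1=\frac{1+m}{\mu_2},$$ and consider the method $\mathrm{HB}_2(h_0,h_1;m)$ (equivalently, with $h_0$ and $h_1$ swapped). Then for every even $t$ its worst-case rate over $\mathcal{C}_\Lambda$ is $$r_t=\left(\frac{\sqrt{\rho^2-R^2}-\sqrt{\rho^2-1}}{\sqrt{1-R^2}}\right)^{t}\left(1+t\sqrt{\frac{\rho^2-1}{\rho^2-R^2}}\right),$$ and its asymptotic rate factor is $1-\tau=\frac{\sqrt{\rho^2-R^2}-\sqrt{\rho^2-1}}{\sqrt{1-R^2}}$.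
   Context: For a set $\Lambda\subseteq[\mu,L]$ with $0<\mu<L$, $\mathcal{C}_\Lambda$ is the class of all quadratic functions $f:\mathbb{R}^d\to\mathbb{R}$ (any $d\ge1$) of the form $f(x)=\tfrac12(x-x_* )^\top H(x-x_* )+f_*$ with $H$ symmetric and spectrum $\mathrm{Sp}(H)\subseteq\Lambda$. For a cycle length $K\ge1$, momentum $m\in(0,1)$ and step-sizes $h_0,\dots,h_{K-1}$, the cyclical heavy ball method $\mathrm{HB}_K(h_0,\dots,h_{K-1};m)$ started at $x_0$ produces $x_1=x_0-\frac{h_0}{1+m}\nabla f(x_0)$ and, for $t\ge1$, $x_{t+1}=x_t-h_{t\bmod K}\nabla f(x_t)+m(x_t-x_{t-1})$. For a method producing iterates $(x_t)$, its worst-case rate over $\mathcal{C}_\Lambda$ is $r_t=\sup_{f\in\mathcal{C}_\Lambda,\,x_0\neq x_*}\|x_t-x_*\|/\|x_0-x_*\|$ and its asymptotic rate factor is $1-\tau=\limsup_{t\to\infty}r_t^{1/t}$. *)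

theory Defs
  imports "Jordan_Normal_Form.Char_Poly" "HOL-Library.Extended_Real" "HOL-Library.Liminf_Limsup"
begin

definition vnorm :: "real vec \<Rightarrow> real" where
  "vnorm v = sqrt (v \<bullet> v)"

(* Quadratic f(x) = 1/2 (x-xs)^T H (x-xs) + fs on R^d with H symmetric and Sp(H) \<subseteq> Lam.
   It is described by its data (d, H, xs, fs). *)
definition in_class :: "real set \<Rightarrow> nat \<Rightarrow> real mat \<Rightarrow> real vec \<Rightarrow> bool" where
  "in_class Lam d H xs \<longleftrightarrow> d \<ge> 1 \<and> H \<in> carrier_mat d d \<and> H\<^sup>T = H \<and> xs \<in> carrier_vec d
     \<and> (\<forall>lam. eigenvalue H lam \<longrightarrow> lam \<in> Lam)"

definition quad_fun :: "real mat \<Rightarrow> real vec \<Rightarrow> real \<Rightarrow> real vec \<Rightarrow> real" where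
  "quad_fun H xs fs x = (1/2) * ((x - xs) \<bullet> (H *\<^sub>v (x - xs))) + fs"

(* gradient of quad_fun H xs fs (H symmetric) *)
definition quad_grad :: "real mat \<Rightarrow> real vec \<Rightarrow> real vec \<Rightarrow> real vec" where
  "quad_grad H xs x = H *\<^sub>v (x - xs)"

fun hb :: "real list \<Rightarrow> real \<Rightarrow> (real vec \<Rightarrow> real vec) \<Rightarrow> real vec \<Rightarrow> nat \<Rightarrow> real vec" where
  "hb hs m g x0 0 = x0"
| "hb hs m g x0 (Suc 0) = x0 - (hs ! 0 / (1 + m)) \<cdot>\<^sub>v g x0"
| "hb hs m g x0 (Suc (Suc t)) =
     hb hs m g x0 (Suc t) - (hs ! (Suc t mod length hs)) \<cdot>\<^sub>v g (hb hs m g x0 (Suc t))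
       + m \<cdot>\<^sub>v (hb hs m g x0 (Suc t) - hb hs m g x0 t)"

definition worst_rate :: "real set \<Rightarrow> real list \<Rightarrow> real \<Rightarrow> nat \<Rightarrow> real" where
  "worst_rate Lam hs m t = Sup {vnorm (hb hs m (quad_grad H xs) x0 t - xs) / vnorm (x0 - xs) | d H xs x0.
       in_class Lam d H xs \<and> x0 \<in> carrier_vec d \<and> x0 \<noteq> xs}"

definition asym_rate :: "real set \<Rightarrow> real list \<Rightarrow> real \<Rightarrow> ereal" where
  "asym_rate Lam hs m = limsup (\<lambda>t. ereal (worst_rate Lam hs m t powr (1 / real t)))"

end

(*
  Along an eigenvector of the Hessian with eigenvalue l the heavy-ball error is multiplied by a
  residual polynomial P_t(l); by the spectral theorem and one-dimensional examples the worst-case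
  rate is therefore r_t = sup {|P_t(l)| | l in Lam}. For a 2-cycle (h0, h1) the residual satisfies
  the two-step recurrence P_(t+4) = (p(l) - 2m) P_(t+2) - m^2 P_t with
  p(l) = (1 + m - h0 l) (1 + m - h1 l), so P_(2k+j) / m^k follows the Chebyshev recurrence with
  parameter s = (p - 2m) / (2m). The momentum m is tuned so that 0 <= p <= 4m on Lam, i.e.
  |s| <= 1, and p(mu1) = 4m, i.e. s = 1 at mu1. The bounds |T_k| <= 1 and |U_k| <= k then give
  |P_2k| <= m^k (1 + 2k (1 - m) / (1 + m)) on Lam with equality at mu1, and |P_t| <= K (t + 1) q^t
  for all t; as m = q^2 this is the claimed r_t, and it forces the asymptotic rate q. Finally
  (1 - m) / (1 + m) = sqrt ((rho^2 - 1) / (rho^2 - R^2)).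
*)
theory Submission
  imports Defs "Jordan_Normal_Form.Schur_Decomposition" "Jordan_Normal_Form.Spectral_Radius"
    "HOL-Real_Asymp.Real_Asymp"
begin

section \<open>Orthonormal eigenbases of real symmetric matrices\<close>

lemma real_sprod_self_pos:
  fixes v :: "real vec"
  assumes "v \<in> carrier_vec n" "v \<noteq> 0\<^sub>v n"
  shows "v \<bullet> v > 0"
  using conjugate_square_greater_0_vec[OF assms(1)] assms(2) by simp

definition orthonormal :: "nat \<Rightarrow> real vec list \<Rightarrow> bool" where
  "orthonormal n us \<longleftrightarrow> length us = n \<and> set us \<subseteq> carrier_vec n \<and>
     (\<forall>i<n. \<forall>j<n. us ! i \<bullet> us ! j = (if i = j then 1 else 0))"

lemma orthonormal_mat_of_cols_carrier: "orthonormal n us \<Longrightarrow> mat_of_cols n us \<in> carrier_mat n n"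
  using mat_of_cols_carrier(1)[of n us] unfolding orthonormal_def by simp

lemma orthonormal_col_mat_of_cols: "orthonormal n us \<Longrightarrow> j < n \<Longrightarrow> col (mat_of_cols n us) j = us ! j"
  unfolding orthonormal_def by (metis col_mat_of_cols nth_mem subsetD)

lemma orthonormal_mat_of_cols:
  assumes us: "orthonormal n us"
  defines "Q \<equiv> mat_of_cols n us"
  shows "Q\<^sup>T * Q = 1\<^sub>m n" and "Q * Q\<^sup>T = 1\<^sub>m n"
proof -
  have Q: "Q \<in> carrier_mat n n"
    unfolding Q_def using us by (rule orthonormal_mat_of_cols_carrier)
  have col: "col Q j = us ! j" if "j < n" for j
    unfolding Q_def using us that by (rule orthonormal_col_mat_of_cols)
  show QtQ: "Q\<^sup>T * Q = 1\<^sub>m n"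
    using us Q by (intro eq_matI) (auto simp: col orthonormal_def)
  show "Q * Q\<^sup>T = 1\<^sub>m n"
    by (rule mat_mult_left_right_inverse[OF _ Q QtQ]) (use Q in auto)
qed

lemma orthogonal_mat_sprod:
  fixes W :: "'a :: comm_semiring_1 mat"
  assumes W: "W \<in> carrier_mat n n" and WtW: "W\<^sup>T * W = 1\<^sub>m n"
    and x: "x \<in> carrier_vec n" and y: "y \<in> carrier_vec n"
  shows "(W *\<^sub>v x) \<bullet> (W *\<^sub>v y) = x \<bullet> y"
proof -
  have "(W *\<^sub>v x) \<bullet> (W *\<^sub>v y) = (W\<^sup>T *\<^sub>v (W *\<^sub>v x)) \<bullet> y"
    using transpose_vec_mult_scalar[of W n n y "W *\<^sub>v x"] W x y by auto
  also have "W\<^sup>T *\<^sub>v (W *\<^sub>v x) = x"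
    using W x by (simp flip: assoc_mult_mat_vec[of _ n n] add: WtW)
  finally show ?thesis .
qed

lemma orthonormal_sum_squares:
  assumes us: "orthonormal n us" and x: "x \<in> carrier_vec n"
  shows "x \<bullet> x = (\<Sum>i<n. (us ! i \<bullet> x)\<^sup>2)"
proof -
  define Q where "Q = mat_of_cols n us"
  have Q: "Q \<in> carrier_mat n n"
    unfolding Q_def using us by (rule orthonormal_mat_of_cols_carrier)
  have col: "col Q j = us ! j" if "j < n" for j
    unfolding Q_def using us that by (rule orthonormal_col_mat_of_cols)
  have "x \<bullet> x = (Q\<^sup>T *\<^sub>v x) \<bullet> (Q\<^sup>T *\<^sub>v x)"
    using orthogonal_mat_sprod[of "Q\<^sup>T" n x x] orthonormal_mat_of_cols(2)[OF us] Q x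
    by (simp add: Q_def)
  also have "\<dots> = (\<Sum>i<n. (us ! i \<bullet> x)\<^sup>2)"
    using Q by (auto simp: scalar_prod_def lessThan_atLeast0 col power2_eq_square intro!: sum.cong)
  finally show ?thesis .
qed

lemma orthonormal_map_orthogonal_mat:
  assumes us: "orthonormal n us" and W: "W \<in> carrier_mat n n" and WtW: "W\<^sup>T * W = 1\<^sub>m n"
  shows "orthonormal n (map ((*\<^sub>v) W) us)"
  using us W by (auto simp: orthonormal_def orthogonal_mat_sprod[OF W WtW] subset_code(1))

lemma orthonormal_vCons:
  assumes ys: "orthonormal n ys"
  shows "orthonormal (Suc n) (unit_vec (Suc n) 0 # map (vCons 0) ys)"
proof -
  have ysc: "ys ! i \<in> carrier_vec n" if "i < n" for i
    using ys that unfolding orthonormal_def by auto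
  have "(unit_vec (Suc n) 0 # map (vCons 0) ys) ! i \<bullet> (unit_vec (Suc n) 0 # map (vCons 0) ys) ! j
          = (if i = j then 1 else 0)" if "i < Suc n" "j < Suc n" for i j
    using that ys ysc by (cases i; cases j) (auto simp: orthonormal_def)
  then show ?thesis
    using ys by (auto simp: orthonormal_def)
qed

lemma orthonormal_normalize:
  assumes ws: "set ws \<subseteq> carrier_vec n" "corthogonal ws" "length ws = n"
  shows "orthonormal n (map (\<lambda>w. (1 / sqrt (w \<bullet> w)) \<cdot>\<^sub>v w) ws)"
proof -
  have carrier: "ws ! i \<in> carrier_vec n" if "i < n" for i
    using ws that by auto
  have orth: "ws ! i \<bullet> ws ! j = 0 \<longleftrightarrow> i \<noteq> j" if "i < n" "j < n" for i j
    using corthogonalD[OF ws(2), of i j] that ws(3) by simp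
  have pos: "ws ! i \<bullet> ws ! i > 0" if "i < n" for i
  proof (rule real_sprod_self_pos[OF carrier[OF that]])
    show "ws ! i \<noteq> 0\<^sub>v n" using orth[OF that that] carrier[OF that] by auto
  qed
  have "(map (\<lambda>w. (1 / sqrt (w \<bullet> w)) \<cdot>\<^sub>v w) ws ! i)
      \<bullet> (map (\<lambda>w. (1 / sqrt (w \<bullet> w)) \<cdot>\<^sub>v w) ws ! j)
      = (ws ! i \<bullet> ws ! j) / (sqrt (ws ! i \<bullet> ws ! i) * sqrt (ws ! j \<bullet> ws ! j))"
    if i: "i < n" and j: "j < n" for i j
    using carrier[OF i] carrier[OF j] i j ws(3) by simp
  then show ?thesis
    using ws orth pos less_imp_le[OF pos] unfolding orthonormal_def by (auto simp flip: power2_eq_square)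
qed

lemma orthonormal_extension:
  assumes v: "v \<in> carrier_vec n" and v1: "v \<bullet> v = 1"
  obtains ws where "orthonormal n ws" "ws ! 0 = v"
proof -
  interpret cof_vec_space n "TYPE(real)" .
  have v0: "v \<noteq> 0\<^sub>v n" using v1 v by auto
  have n: "0 < n" using v0 v by (cases n) auto
  define b where "b = basis_completion v"
  from basis_completion[OF v v0, folded b_def]
  have b: "distinct b" "\<not> lin_dep (set b)" "set b \<subseteq> carrier_vec n" "hd b = v" "length b = n"
    by auto
  then obtain vs where bv: "b = v # vs"
    using n by (cases b) auto
  define ws where "ws = gram_schmidt n b"
  from gram_schmidt_result[OF b(3,1,2) refl, folded ws_def]
  have ws: "set ws \<subseteq> carrier_vec n" "corthogonal ws" "length ws = n"
    using b(5) by auto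
  have "hd ws = v"
    using gram_schmidt_hd[OF v, of vs] unfolding ws_def bv .
  then have "ws ! 0 = v"
    using ws(3) n by (cases ws) auto
  then have "map (\<lambda>w. (1 / sqrt (w \<bullet> w)) \<cdot>\<^sub>v w) ws ! 0 = v"
    using ws(3) n v1 by simp
  with orthonormal_normalize[OF ws] show ?thesis by (rule that)
qed

lemma real_symmetric_hermitian_form:
  fixes A :: "real mat" and v :: "complex vec"
  assumes A: "A \<in> carrier_mat n n" and sym: "A\<^sup>T = A" and v: "v \<in> carrier_vec n"
  defines "s \<equiv> (\<Sum>i<n. cnj (v $ i) * (map_mat complex_of_real A *\<^sub>v v) $ i)"
  shows "cnj s = s"
proof -
  have sym_entry: "A $$ (i, j) = A $$ (j, i)" if "i < n" "j < n" for i j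
    using arg_cong[OF sym, of "\<lambda>M. M $$ (i, j)"] that A by auto
  have s: "s = (\<Sum>i<n. \<Sum>j<n. cnj (v $ i) * of_real (A $$ (i, j)) * v $ j)"
    unfolding s_def using v A
    by (auto simp: scalar_prod_def sum_distrib_left lessThan_atLeast0 mult.assoc intro!: sum.cong)
  have "cnj s = (\<Sum>i<n. \<Sum>j<n. v $ i * of_real (A $$ (i, j)) * cnj (v $ j))"
    unfolding s by simp
  also have "\<dots> = (\<Sum>j<n. \<Sum>i<n. v $ i * of_real (A $$ (i, j)) * cnj (v $ j))"
    by (rule sum.swap)
  also have "\<dots> = s"
    unfolding s by (intro sum.cong refl) (auto simp: sym_entry mult.commute mult.left_commute)
  finally show ?thesis .
qed

lemma symmetric_real_eigenvalue:
  fixes A :: "real mat"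
  assumes A: "A \<in> carrier_mat n n" and sym: "A\<^sup>T = A" and n: "0 < n"
  obtains e where "eigenvalue A e"
proof -
  let ?C = "map_mat complex_of_real A"
  have C: "?C \<in> carrier_mat n n" using A by auto
  obtain mu where "eigenvalue ?C mu"
    using spectrum_non_empty[OF C n] unfolding spectrum_def by auto
  then obtain v where v: "v \<in> carrier_vec n" "v \<noteq> 0\<^sub>v n" "?C *\<^sub>v v = mu \<cdot>\<^sub>v v"
    unfolding eigenvalue_def eigenvector_def using C by auto
  define N where "N = (\<Sum>i<n. cnj (v $ i) * v $ i)"
  have form: "(\<Sum>i<n. cnj (v $ i) * (?C *\<^sub>v v) $ i) = mu * N"
    unfolding N_def v(3) using v(1) by (auto simp: sum_distrib_left intro!: sum.cong)
  have N_real: "N = of_real (\<Sum>i<n. (cmod (v $ i))\<^sup>2)"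
    unfolding N_def of_real_sum by (intro sum.cong refl) (simp only: complex_norm_square mult.commute)
  obtain k where "k < n" "v $ k \<noteq> 0"
    using v(1,2) by (metis eq_vecI carrier_vecD index_zero_vec(1,2))
  then have "(\<Sum>i<n. (cmod (v $ i))\<^sup>2) > 0"
    by (intro sum_pos2[of _ k]) auto
  then have "N \<noteq> 0" "cnj N = N"
    unfolding N_real by (auto simp del: of_real_sum of_real_power)
  then have "cnj mu = mu"
    using real_symmetric_hermitian_form[OF A sym v(1)] unfolding form by simp
  then have mu: "mu = of_real (Re mu)"
    by (metis Reals_cnj_iff complex_is_Real_iff of_real_Re)
  have "poly (char_poly ?C) mu = 0"
    using \<open>eigenvalue ?C mu\<close> eigenvalue_root_char_poly[OF C] by auto
  then have "poly (map_poly of_real (char_poly A)) (of_real (Re mu) :: complex) = 0"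
    using of_real_hom.char_poly_hom[OF A] mu by metis
  then have "poly (char_poly A) (Re mu) = 0"
    by (simp add: of_real_hom.poly_map_poly)
  then show ?thesis
    using eigenvalue_root_char_poly[OF A] that by auto
qed

lemma symmetric_unit_eigenvector:
  fixes A :: "real mat"
  assumes A: "A \<in> carrier_mat n n" and sym: "A\<^sup>T = A" and n: "0 < n"
  obtains v e where "v \<in> carrier_vec n" "v \<bullet> v = 1" "A *\<^sub>v v = e \<cdot>\<^sub>v v"
proof -
  obtain e where "eigenvalue A e"
    using symmetric_real_eigenvalue[OF assms] .
  then obtain w where w: "w \<in> carrier_vec n" "w \<noteq> 0\<^sub>v n" "A *\<^sub>v w = e \<cdot>\<^sub>v w"
    unfolding eigenvalue_def eigenvector_def using A by auto
  have pos: "w \<bullet> w > 0"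
    using real_sprod_self_pos[OF w(1,2)] .
  define v where "v = (1 / sqrt (w \<bullet> w)) \<cdot>\<^sub>v w"
  have "v \<in> carrier_vec n" "v \<bullet> v = 1"
    unfolding v_def using w(1) pos by auto
  moreover have "A *\<^sub>v v = e \<cdot>\<^sub>v v"
    unfolding v_def using mult_mat_vec[OF A w(1)] w(3) by (auto simp: smult_smult_assoc mult.commute)
  ultimately show ?thesis by (rule that)
qed

lemma mult_mat_vec_vCons_0:
  fixes M :: "'a :: comm_semiring_0 mat"
  assumes M: "M \<in> carrier_mat (Suc n) (Suc n)" and row0: "\<And>j. j < n \<Longrightarrow> M $$ (0, Suc j) = 0"
    and y: "y \<in> carrier_vec n"
  shows "M *\<^sub>v vCons 0 y = vCons 0 (mat n n (\<lambda>(i, j). M $$ (Suc i, Suc j)) *\<^sub>v y)"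
proof (rule eq_vecI)
  fix i assume "i < dim_vec (vCons 0 (mat n n (\<lambda>(i, j). M $$ (Suc i, Suc j)) *\<^sub>v y))"
  then have i: "i < Suc n" by simp
  have "(M *\<^sub>v vCons 0 y) $ i = (\<Sum>j<Suc n. M $$ (i, j) * vCons 0 y $ j)"
    using i M y by (auto simp: scalar_prod_def lessThan_atLeast0)
  also have "\<dots> = (\<Sum>j<n. M $$ (i, Suc j) * y $ j)"
    by (subst sum.lessThan_Suc_shift) simp
  finally have "(M *\<^sub>v vCons 0 y) $ i = (\<Sum>j<n. M $$ (i, Suc j) * y $ j)" .
  moreover have "(\<Sum>j<n. M $$ (i, Suc j) * y $ j)
      = vCons 0 (mat n n (\<lambda>(i, j). M $$ (Suc i, Suc j)) *\<^sub>v y) $ i"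
  proof (cases i)
    case 0
    then show ?thesis using row0 by simp
  next
    case (Suc k)
    then show ?thesis using i y by (simp add: scalar_prod_def lessThan_atLeast0)
  qed
  ultimately show "(M *\<^sub>v vCons 0 y) $ i = vCons 0 (mat n n (\<lambda>(i, j). M $$ (Suc i, Suc j)) *\<^sub>v y) $ i"
    by simp
qed (use M in auto)

lemma mult_mat_vec_unit_vec:
  fixes W :: "'a :: semiring_1 mat"
  assumes "W \<in> carrier_mat n n" "i < n"
  shows "W *\<^sub>v unit_vec n i = col W i"
proof (rule eq_vecI)
  fix k assume "k < dim_vec (col W i)"
  then show "(W *\<^sub>v unit_vec n i) $ k = col W i $ k"
    using assms by simp
qed (use assms in simp)

lemma orthogonal_conj_eigenvector:
  fixes A W :: "real mat"
  assumes A: "A \<in> carrier_mat n n" and W: "W \<in> carrier_mat n n" and WWt: "W * W\<^sup>T = 1\<^sub>m n"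
    and z: "z \<in> carrier_vec n" and eig: "(W\<^sup>T * (A * W)) *\<^sub>v z = \<mu> \<cdot>\<^sub>v z"
  shows "A *\<^sub>v (W *\<^sub>v z) = \<mu> \<cdot>\<^sub>v (W *\<^sub>v z)"
proof -
  have "W * (W\<^sup>T * (A * W)) = A * W"
    using A W by (subst assoc_mult_mat[symmetric, of _ n n _ n _ n]) (auto simp: WWt)
  then have "A *\<^sub>v (W *\<^sub>v z) = W *\<^sub>v ((W\<^sup>T * (A * W)) *\<^sub>v z)"
    using A W z by (metis assoc_mult_mat_vec mult_carrier_mat transpose_carrier_mat)
  then show ?thesis
    unfolding eig using mult_mat_vec[OF W z] by simp
qed

lemma symmetric_deflation:
  fixes A W :: "real mat"
  assumes A: "A \<in> carrier_mat (Suc n) (Suc n)" and sym: "A\<^sup>T = A"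
    and W: "W \<in> carrier_mat (Suc n) (Suc n)" and WtW: "W\<^sup>T * W = 1\<^sub>m (Suc n)"
    and eig: "A *\<^sub>v col W 0 = e \<cdot>\<^sub>v col W 0"
  defines "C \<equiv> W\<^sup>T * (A * W)"
  defines "B \<equiv> mat n n (\<lambda>(i, j). C $$ (Suc i, Suc j))"
  shows "B\<^sup>T = B" and "y \<in> carrier_vec n \<Longrightarrow> C *\<^sub>v vCons 0 y = vCons 0 (B *\<^sub>v y)"
proof -
  have C: "C \<in> carrier_mat (Suc n) (Suc n)" unfolding C_def using A W by auto
  have "C\<^sup>T = (A * W)\<^sup>T * W"
    unfolding C_def using A W by (subst transpose_mult[of _ "Suc n" "Suc n"]) auto
  also have "(A * W)\<^sup>T = W\<^sup>T * A\<^sup>T"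
    using A W by (rule transpose_mult)
  finally have "C\<^sup>T = C"
    unfolding C_def sym using A W by (simp add: assoc_mult_mat[of _ "Suc n" "Suc n"])
  then have C_sym: "C $$ (i, j) = C $$ (j, i)" if "i < Suc n" "j < Suc n" for i j
    using index_transpose_mat(1)[of j C i] that C by simp
  have "C $$ (Suc j, 0) = e * (W\<^sup>T * W) $$ (Suc j, 0)" if "j < n" for j
  proof -
    have "C $$ (Suc j, 0) = col W (Suc j) \<bullet> (A *\<^sub>v col W 0)"
      unfolding C_def using A W that by (auto simp: mult_mat_vec_def)
    also have "\<dots> = e * (W\<^sup>T * W) $$ (Suc j, 0)"
      unfolding eig using W that by simp
    finally show ?thesis .
  qed
  then have row0: "C $$ (0, Suc j) = 0" if "j < n" for j
    using C_sym[of 0 "Suc j"] that by (simp add: WtW)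
  show "B\<^sup>T = B"
    using C_sym unfolding B_def by (intro eq_matI) auto
  show "y \<in> carrier_vec n \<Longrightarrow> C *\<^sub>v vCons 0 y = vCons 0 (B *\<^sub>v y)"
    unfolding B_def by (rule mult_mat_vec_vCons_0[OF C row0])
qed

definition orthonormal_eigenbasis :: "real mat \<Rightarrow> nat \<Rightarrow> real vec list \<Rightarrow> bool" where
  "orthonormal_eigenbasis A n us \<longleftrightarrow>
     orthonormal n us \<and> (\<forall>u \<in> set us. \<exists>e. A *\<^sub>v u = e \<cdot>\<^sub>v u)"

lemma orthonormal_eigenbasis_lift:
  fixes A W :: "real mat"
  assumes A: "A \<in> carrier_mat (Suc n) (Suc n)" and sym: "A\<^sup>T = A"
    and W: "W \<in> carrier_mat (Suc n) (Suc n)"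
    and WtW: "W\<^sup>T * W = 1\<^sub>m (Suc n)" and WWt: "W * W\<^sup>T = 1\<^sub>m (Suc n)"
    and eig: "A *\<^sub>v col W 0 = e \<cdot>\<^sub>v col W 0"
    and ys: "orthonormal_eigenbasis (mat n n (\<lambda>(i, j). (W\<^sup>T * (A * W)) $$ (Suc i, Suc j))) n ys"
  shows "orthonormal_eigenbasis A (Suc n) (map ((*\<^sub>v) W) (unit_vec (Suc n) 0 # map (vCons 0) ys))"
proof -
  define us where "us = map ((*\<^sub>v) W) (unit_vec (Suc n) 0 # map (vCons 0) ys)"
  note deflation = symmetric_deflation[OF A sym W WtW eig]
  have "orthonormal (Suc n) (unit_vec (Suc n) 0 # map (vCons 0) ys)"
    using orthonormal_vCons ys unfolding orthonormal_eigenbasis_def by blast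
  then have "orthonormal (Suc n) us"
    unfolding us_def by (rule orthonormal_map_orthogonal_mat[OF _ W WtW])
  moreover have "\<exists>\<mu>. A *\<^sub>v u = \<mu> \<cdot>\<^sub>v u" if "u \<in> set us" for u
  proof -
    consider "u = W *\<^sub>v unit_vec (Suc n) 0" | y where "y \<in> set ys" "u = W *\<^sub>v vCons 0 y"
      using \<open>u \<in> set us\<close> unfolding us_def by auto
    then show ?thesis
    proof cases
      case 1
      then show ?thesis
        unfolding mult_mat_vec_unit_vec[OF W zero_less_Suc] using eig by blast
    next
      case (2 y)
      obtain \<mu> where "mat n n (\<lambda>(i, j). (W\<^sup>T * (A * W)) $$ (Suc i, Suc j)) *\<^sub>v y = \<mu> \<cdot>\<^sub>v y"
        using ys 2 unfolding orthonormal_eigenbasis_def by blast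
      moreover have y: "y \<in> carrier_vec n"
        using ys 2 unfolding orthonormal_eigenbasis_def orthonormal_def by blast
      ultimately have "(W\<^sup>T * (A * W)) *\<^sub>v vCons 0 y = \<mu> \<cdot>\<^sub>v vCons 0 y"
        using deflation(2)[OF y] by (auto intro!: eq_vecI simp: vec_index_vCons)
      then show ?thesis
        using orthogonal_conj_eigenvector[OF A W WWt _] y 2 by auto
    qed
  qed
  ultimately show ?thesis
    unfolding orthonormal_eigenbasis_def us_def[symmetric] by blast
qed

theorem symmetric_orthonormal_eigenbasis:
  fixes A :: "real mat"
  assumes "A \<in> carrier_mat n n" and "A\<^sup>T = A"
  shows "\<exists>us. orthonormal_eigenbasis A n us"
  using assms
proof (induction n arbitrary: A)
  case 0
  show ?case by (auto simp: orthonormal_eigenbasis_def orthonormal_def)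
next
  case (Suc n)
  obtain v e where v: "v \<in> carrier_vec (Suc n)" "v \<bullet> v = 1" and Av: "A *\<^sub>v v = e \<cdot>\<^sub>v v"
    using symmetric_unit_eigenvector[OF Suc.prems] by blast
  obtain ws where ws: "orthonormal (Suc n) ws" "ws ! 0 = v"
    using orthonormal_extension[OF v] .
  define W where "W = mat_of_cols (Suc n) ws"
  have W: "W \<in> carrier_mat (Suc n) (Suc n)"
    unfolding W_def using ws(1) by (rule orthonormal_mat_of_cols_carrier)
  have W0: "col W 0 = v"
    unfolding W_def using orthonormal_col_mat_of_cols[OF ws(1)] ws(2) by simp
  note WtW = orthonormal_mat_of_cols(1)[OF ws(1), folded W_def]
  note WWt = orthonormal_mat_of_cols(2)[OF ws(1), folded W_def]
  define B where "B = mat n n (\<lambda>(i, j). (W\<^sup>T * (A * W)) $$ (Suc i, Suc j))"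
  have eig: "A *\<^sub>v col W 0 = e \<cdot>\<^sub>v col W 0"
    unfolding W0 by (rule Av)
  have "B \<in> carrier_mat n n"
    unfolding B_def by simp
  moreover have "B\<^sup>T = B"
    using symmetric_deflation(1)[OF Suc.prems W WtW eig] unfolding B_def .
  ultimately obtain ys where "orthonormal_eigenbasis B n ys"
    using Suc.IH by blast
  then have "orthonormal_eigenbasis A (Suc n) (map ((*\<^sub>v) W) (unit_vec (Suc n) 0 # map (vCons 0) ys))"
    unfolding B_def by (rule orthonormal_eigenbasis_lift[OF Suc.prems W WtW WWt eig])
  then show ?case ..
qed

lemma orthonormal_eigenbasis_nth:
  assumes us: "orthonormal_eigenbasis A n us" and A: "A \<in> carrier_mat n n" and i: "i < n"
  obtains e where "eigenvalue A e" "A *\<^sub>v us ! i = e \<cdot>\<^sub>v us ! i" "us ! i \<in> carrier_vec n"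
proof -
  have u: "us ! i \<in> carrier_vec n" "us ! i \<bullet> us ! i = 1" "us ! i \<in> set us"
    using us i unfolding orthonormal_eigenbasis_def orthonormal_def by auto
  then obtain e where "A *\<^sub>v us ! i = e \<cdot>\<^sub>v us ! i"
    using us unfolding orthonormal_eigenbasis_def by blast
  moreover have "us ! i \<noteq> 0\<^sub>v n"
    using u by auto
  ultimately show thesis
    using that u A unfolding eigenvalue_def eigenvector_def by auto
qed

section \<open>Residual polynomials of the heavy-ball method\<close>

fun hb_residual :: "real list \<Rightarrow> real \<Rightarrow> real \<Rightarrow> nat \<Rightarrow> real" where
  "hb_residual hs m l 0 = 1"
| "hb_residual hs m l (Suc 0) = 1 - hs ! 0 / (1 + m) * l"
| "hb_residual hs m l (Suc (Suc t)) =
     (1 + m - hs ! (Suc t mod length hs) * l) * hb_residual hs m l (Suc t) - m * hb_residual hs m l t"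

lemma continuous_hb_residual: "continuous_on S (\<lambda>l. hb_residual hs m l t)"
proof (induction t rule: induct_nat_012)
  case 1
  show ?case
    unfolding hb_residual.simps
    by (intro continuous_on_diff continuous_on_mult continuous_on_const continuous_on_id)
next
  case (ge2 t)
  then show ?case
    unfolding hb_residual.simps
    by (intro continuous_on_diff continuous_on_mult continuous_on_const continuous_on_id)
qed simp

lemma hb_carrier:
  assumes H: "H \<in> carrier_mat d d" and xs: "xs \<in> carrier_vec d" and x0: "x0 \<in> carrier_vec d"
  shows "hb hs m (quad_grad H xs) x0 t \<in> carrier_vec d"
  by (induction t rule: induct_nat_012) (use H xs x0 in \<open>auto simp: quad_grad_def\<close>)

lemma hb_eigencomponent:
  assumes H: "H \<in> carrier_mat d d" and sym: "H\<^sup>T = H" and xs: "xs \<in> carrier_vec d"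
    and x0: "x0 \<in> carrier_vec d" and u: "u \<in> carrier_vec d" and Hu: "H *\<^sub>v u = l \<cdot>\<^sub>v u"
  shows "u \<bullet> (hb hs m (quad_grad H xs) x0 t - xs) = hb_residual hs m l t * (u \<bullet> (x0 - xs))"
proof -
  let ?x = "hb hs m (quad_grad H xs) x0"
  have x: "?x t \<in> carrier_vec d" for t
    using hb_carrier[OF H xs x0] .
  have grad: "quad_grad H xs y \<in> carrier_vec d" if "y \<in> carrier_vec d" for y
    unfolding quad_grad_def using H that xs by auto
  have u_grad: "u \<bullet> quad_grad H xs y = l * (u \<bullet> (y - xs))" if y: "y \<in> carrier_vec d" for y
  proof -
    have "u \<bullet> quad_grad H xs y = (H\<^sup>T *\<^sub>v u) \<bullet> (y - xs)"
      unfolding quad_grad_def using H y xs u by (intro transpose_vec_mult_scalar[symmetric]) auto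
    then show ?thesis unfolding sym Hu using u y xs by simp
  qed
  show ?thesis
  proof (induction t rule: induct_nat_012)
    case 0
    then show ?case by simp
  next
    case 1
    have step: "?x 1 - xs = (x0 - xs) - (hs ! 0 / (1 + m)) \<cdot>\<^sub>v quad_grad H xs x0"
      using x0 xs grad[OF x0] by (intro eq_vecI) auto
    have "u \<bullet> (?x 1 - xs) = u \<bullet> (x0 - xs) - (hs ! 0 / (1 + m)) * (u \<bullet> quad_grad H xs x0)"
      unfolding step using u x0 xs grad[OF x0] by (subst scalar_prod_minus_distrib[of u d]) auto
    then show ?case
      unfolding u_grad[OF x0] by (simp add: algebra_simps)
  next
    case (ge2 t)
    let ?h = "hs ! (Suc t mod length hs)"
    have "?x (Suc (Suc t)) - xs = (?x (Suc t) - xs) - ?h \<cdot>\<^sub>v quad_grad H xs (?x (Suc t))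
        + m \<cdot>\<^sub>v ((?x (Suc t) - xs) - (?x t - xs))"
      using x[of "Suc t"] x[of t] xs grad[OF x[of "Suc t"]] by (intro eq_vecI) auto
    then have "u \<bullet> (?x (Suc (Suc t)) - xs) = u \<bullet> (?x (Suc t) - xs)
        - ?h * (u \<bullet> quad_grad H xs (?x (Suc t))) + m * (u \<bullet> (?x (Suc t) - xs) - u \<bullet> (?x t - xs))"
      using u x[of "Suc t"] x[of t] xs grad[OF x[of "Suc t"]]
      by (simp add: scalar_prod_add_distrib[of _ d] scalar_prod_minus_distrib[of _ d])
    then show ?case
      unfolding u_grad[OF x] ge2 by (simp add: algebra_simps)
  qed
qed

lemma vnorm_diff_pos:
  assumes "x \<in> carrier_vec d" "y \<in> carrier_vec d" "x \<noteq> y"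
  shows "vnorm (x - y) > 0"
proof -
  have "x - y \<noteq> 0\<^sub>v d"
  proof
    assume "x - y = 0\<^sub>v d"
    then have "x $ i = y $ i" if "i < d" for i
    proof -
      have "x $ i - y $ i = (x - y) $ i" using that assms(1,2) by simp
      also have "\<dots> = 0" using \<open>x - y = 0\<^sub>v d\<close> that by simp
      finally show ?thesis by simp
    qed
    then have "x = y" using assms(1,2) by (intro eq_vecI) auto
    then show False using assms(3) by simp
  qed
  then show ?thesis
    unfolding vnorm_def using real_sprod_self_pos[of "x - y" d] assms by simp
qed

lemma hb_error_norm_le:
  assumes cls: "in_class Lam d H xs" and x0: "x0 \<in> carrier_vec d"
    and M: "\<And>l. l \<in> Lam \<Longrightarrow> \<bar>hb_residual hs m l t\<bar> \<le> M"
  shows "vnorm (hb hs m (quad_grad H xs) x0 t - xs) \<le> M * vnorm (x0 - xs)"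
proof -
  from cls have H: "H \<in> carrier_mat d d" and sym: "H\<^sup>T = H" and xs: "xs \<in> carrier_vec d"
    and spec: "\<And>l. eigenvalue H l \<Longrightarrow> l \<in> Lam" and d: "0 < d"
    unfolding in_class_def by auto
  obtain e where "eigenvalue H e"
    using symmetric_real_eigenvalue[OF H sym d] .
  then have M0: "0 \<le> M"
    using M[OF spec] by (meson abs_ge_zero order_trans)
  obtain us where us: "orthonormal_eigenbasis H d us"
    using symmetric_orthonormal_eigenbasis[OF H sym] by blast
  then have on: "orthonormal d us"
    unfolding orthonormal_eigenbasis_def by simp
  let ?e = "hb hs m (quad_grad H xs) x0 t - xs"
  have "(us ! i \<bullet> ?e)\<^sup>2 \<le> M\<^sup>2 * (us ! i \<bullet> (x0 - xs))\<^sup>2" if i: "i < d" for i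
  proof -
    obtain l where "eigenvalue H l" and Hu: "H *\<^sub>v us ! i = l \<cdot>\<^sub>v us ! i" and u: "us ! i \<in> carrier_vec d"
      using orthonormal_eigenbasis_nth[OF us H i] .
    then have "(hb_residual hs m l t)\<^sup>2 \<le> M\<^sup>2"
      using M[OF spec] M0 abs_le_square_iff by fastforce
    then show ?thesis
      unfolding hb_eigencomponent[OF H sym xs x0 u Hu]
      by (simp add: power_mult_distrib mult_right_mono)
  qed
  moreover have "?e \<in> carrier_vec d" "x0 - xs \<in> carrier_vec d"
    using hb_carrier[OF H xs x0] x0 xs by auto
  ultimately have "?e \<bullet> ?e \<le> (\<Sum>i<d. M\<^sup>2 * (us ! i \<bullet> (x0 - xs))\<^sup>2)"
    by (subst orthonormal_sum_squares[OF on]) (auto intro!: sum_mono)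
  also have "\<dots> = M\<^sup>2 * ((x0 - xs) \<bullet> (x0 - xs))"
    using x0 xs by (simp add: orthonormal_sum_squares[OF on] sum_distrib_left)
  finally have "?e \<bullet> ?e \<le> M\<^sup>2 * ((x0 - xs) \<bullet> (x0 - xs))" .
  then have "sqrt (?e \<bullet> ?e) \<le> sqrt (M\<^sup>2 * ((x0 - xs) \<bullet> (x0 - xs)))"
    by (rule real_sqrt_le_mono)
  then show ?thesis
    unfolding vnorm_def using M0 by (simp add: real_sqrt_mult)
qed

lemma eigenvalue_mat_1_1:
  fixes l l' :: real
  assumes "eigenvalue (mat 1 1 (\<lambda>_. l)) l'"
  shows "l' = l"
proof -
  define M where "M = mat 1 1 (\<lambda>_. l)"
  obtain v where v: "v \<in> carrier_vec 1" "v \<noteq> 0\<^sub>v 1" "M *\<^sub>v v = l' \<cdot>\<^sub>v v"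
    using assms unfolding M_def[symmetric] eigenvalue_def eigenvector_def by (auto simp: M_def)
  have "v $ 0 \<noteq> 0"
  proof
    assume "v $ 0 = 0"
    then have "v = 0\<^sub>v 1" using v(1) by (intro eq_vecI) auto
    then show False using v(2) by simp
  qed
  moreover have "l * v $ 0 = l' * v $ 0"
  proof -
    have "(M *\<^sub>v v) $ 0 = l * v $ 0"
      unfolding M_def using v(1) by (auto simp: scalar_prod_def)
    moreover have "(M *\<^sub>v v) $ 0 = l' * v $ 0"
      unfolding v(3) using v(1) by simp
    ultimately show ?thesis by (simp only:)
  qed
  ultimately show ?thesis by simp
qed

lemma hb_residual_attained:
  assumes l: "l \<in> Lam"
  shows "\<exists>d H xs x0. in_class Lam d H xs \<and> x0 \<in> carrier_vec d \<and> x0 \<noteq> xs \<and>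
           vnorm (hb hs m (quad_grad H xs) x0 t - xs) / vnorm (x0 - xs) = \<bar>hb_residual hs m l t\<bar>"
proof (intro exI conjI)
  define H :: "real mat" where "H = mat 1 1 (\<lambda>_. l)"
  define xs :: "real vec" where "xs = 0\<^sub>v 1"
  define x0 :: "real vec" where "x0 = unit_vec 1 0"
  have H: "H \<in> carrier_mat 1 1" and sym: "H\<^sup>T = H"
    unfolding H_def by (auto intro: eq_matI)
  have xs: "xs \<in> carrier_vec 1" and x0: "x0 \<in> carrier_vec 1"
    unfolding xs_def x0_def by auto
  have Hx0: "H *\<^sub>v x0 = l \<cdot>\<^sub>v x0"
    unfolding H_def x0_def by (intro eq_vecI) (auto simp: scalar_prod_def)
  have "l' = l" if "eigenvalue H l'" for l'
    using that unfolding H_def by (rule eigenvalue_mat_1_1)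
  then show "in_class Lam 1 H xs"
    unfolding in_class_def using H sym xs l by auto
  show "x0 \<in> carrier_vec 1" by (fact x0)
  have "x0 $ 0 \<noteq> xs $ 0"
    unfolding x0_def xs_def by simp
  then show "x0 \<noteq> xs" by auto
  let ?e = "hb hs m (quad_grad H xs) x0 t - xs"
  have e: "?e \<in> carrier_vec 1"
    using hb_carrier[OF H xs x0] xs by simp
  have "?e $ 0 = hb_residual hs m l t"
    using hb_eigencomponent[OF H sym xs x0 x0 Hx0, of hs m t] e
    unfolding x0_def xs_def by simp
  moreover have "?e \<bullet> ?e = ?e $ 0 * ?e $ 0"
    using e xs by (simp add: scalar_prod_def)
  then have "vnorm ?e = \<bar>?e $ 0\<bar>"
    unfolding vnorm_def by simp
  moreover have "vnorm (x0 - xs) = 1"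
    unfolding vnorm_def x0_def xs_def by (simp add: scalar_prod_def)
  ultimately show "vnorm ?e / vnorm (x0 - xs) = \<bar>hb_residual hs m l t\<bar>"
    by simp
qed

theorem worst_rate_eq_SUP:
  assumes ne: "Lam \<noteq> {}" and bdd: "bdd_above ((\<lambda>l. \<bar>hb_residual hs m l t\<bar>) ` Lam)"
  shows "worst_rate Lam hs m t = (SUP l\<in>Lam. \<bar>hb_residual hs m l t\<bar>)"
proof -
  define S where "S = {vnorm (hb hs m (quad_grad H xs) x0 t - xs) / vnorm (x0 - xs) | d H xs x0.
       in_class Lam d H xs \<and> x0 \<in> carrier_vec d \<and> x0 \<noteq> xs}"
  have attained: "\<bar>hb_residual hs m l t\<bar> \<in> S" if l: "l \<in> Lam" for l
  proof -
    obtain d H xs x0 where "in_class Lam d H xs" "x0 \<in> carrier_vec d" "x0 \<noteq> xs"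
      "\<bar>hb_residual hs m l t\<bar> = vnorm (hb hs m (quad_grad H xs) x0 t - xs) / vnorm (x0 - xs)"
      using hb_residual_attained[OF l] by metis
    then show ?thesis unfolding S_def by blast
  qed
  have bounded: "y \<le> (SUP l\<in>Lam. \<bar>hb_residual hs m l t\<bar>)" if "y \<in> S" for y
  proof -
    obtain d H xs x0 where y: "y = vnorm (hb hs m (quad_grad H xs) x0 t - xs) / vnorm (x0 - xs)"
      and cls: "in_class Lam d H xs" and x0: "x0 \<in> carrier_vec d" and ne: "x0 \<noteq> xs"
      using \<open>y \<in> S\<close> unfolding S_def by auto
    have "vnorm (x0 - xs) > 0"
      using vnorm_diff_pos[OF x0 _ ne] cls unfolding in_class_def by auto
    moreover have "vnorm (hb hs m (quad_grad H xs) x0 t - xs)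
        \<le> (SUP l\<in>Lam. \<bar>hb_residual hs m l t\<bar>) * vnorm (x0 - xs)"
      by (rule hb_error_norm_le[OF cls x0 cSUP_upper[OF _ bdd]])
    ultimately show ?thesis
      unfolding y by (simp add: divide_le_eq)
  qed
  have "S \<noteq> {}" using attained ne by blast
  then have "Sup S \<le> (SUP l\<in>Lam. \<bar>hb_residual hs m l t\<bar>)"
    using bounded by (rule cSup_least)
  moreover have "bdd_above S"
    using bounded by (rule bdd_aboveI)
  then have "(SUP l\<in>Lam. \<bar>hb_residual hs m l t\<bar>) \<le> Sup S"
    using ne attained by (intro cSUP_least cSup_upper)
  ultimately show ?thesis
    unfolding worst_rate_def S_def[symmetric] by simp
qed

section \<open>Chebyshev recurrences and the two-step heavy ball\<close>

fun chebyshev_T :: "real \<Rightarrow> nat \<Rightarrow> real" where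
  "chebyshev_T s 0 = 1"
| "chebyshev_T s (Suc 0) = s"
| "chebyshev_T s (Suc (Suc k)) = 2 * s * chebyshev_T s (Suc k) - chebyshev_T s k"

(* Shifted by one: chebyshev_U s k is the usual U_(k-1)(s). *)
fun chebyshev_U :: "real \<Rightarrow> nat \<Rightarrow> real" where
  "chebyshev_U s 0 = 0"
| "chebyshev_U s (Suc 0) = 1"
| "chebyshev_U s (Suc (Suc k)) = 2 * s * chebyshev_U s (Suc k) - chebyshev_U s k"

lemma chebyshev_recurrence_zero:
  fixes w :: "nat \<Rightarrow> real"
  assumes "\<And>k. w (Suc (Suc k)) = 2 * s * w (Suc k) - w k" and "w 0 = 0" and "w 1 = 0"
  shows "w k = 0"
  by (induction k rule: induct_nat_012) (use assms in simp_all)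

lemma chebyshev_T_cos: "chebyshev_T (cos \<theta>) k = cos (real k * \<theta>)"
proof (induction k rule: induct_nat_012)
  case (ge2 k)
  have "cos (a + \<theta>) = 2 * cos \<theta> * cos a - cos (a - \<theta>)" for a
    by (simp add: cos_add cos_diff)
  from this[of "real (Suc k) * \<theta>"] show ?case
    using ge2 by (simp add: algebra_simps)
qed simp_all

lemma abs_chebyshev_T_le:
  assumes "\<bar>s\<bar> \<le> 1"
  shows "\<bar>chebyshev_T s k\<bar> \<le> 1"
  using chebyshev_T_cos[of "arccos s" k] assms by (simp add: cos_arccos_abs)

lemma chebyshev_U_Suc: "chebyshev_U s (Suc k) = s * chebyshev_U s k + chebyshev_T s k"
proof -
  have "chebyshev_U s (Suc k) - s * chebyshev_U s k - chebyshev_T s k = 0"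
    by (rule chebyshev_recurrence_zero[where w = "\<lambda>k. chebyshev_U s (Suc k) - s * chebyshev_U s k - chebyshev_T s k"])
      (simp_all add: algebra_simps)
  then show ?thesis by simp
qed

lemma abs_chebyshev_U_le:
  assumes "\<bar>s\<bar> \<le> 1"
  shows "\<bar>chebyshev_U s k\<bar> \<le> real k"
proof (induction k)
  case (Suc k)
  have "\<bar>chebyshev_U s (Suc k)\<bar> \<le> \<bar>s\<bar> * \<bar>chebyshev_U s k\<bar> + \<bar>chebyshev_T s k\<bar>"
    unfolding chebyshev_U_Suc by (metis abs_mult abs_triangle_ineq)
  also have "\<dots> \<le> 1 * real k + 1"
    using Suc assms abs_chebyshev_T_le[OF assms] by (intro add_mono mult_mono) auto
  finally show ?case by simp
qed simp

lemma chebyshev_recurrence_solution: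
  assumes rec: "\<And>k. w (Suc (Suc k)) = 2 * s * w (Suc k) - w k"
  shows "w k = w 0 * chebyshev_T s k + (w 1 - s * w 0) * chebyshev_U s k"
proof -
  have "w k - (w 0 * chebyshev_T s k + (w 1 - s * w 0) * chebyshev_U s k) = 0"
    by (rule chebyshev_recurrence_zero[where w = "\<lambda>k. w k - (w 0 * chebyshev_T s k + (w 1 - s * w 0) * chebyshev_U s k)"])
      (simp_all add: rec algebra_simps)
  then show ?thesis by simp
qed

lemma chebyshev_recurrence_bound:
  assumes rec: "\<And>k. w (Suc (Suc k)) = 2 * s * w (Suc k) - w k" and s: "\<bar>s\<bar> \<le> 1"
  shows "\<bar>w k\<bar> \<le> \<bar>w 0\<bar> + real k * \<bar>w 1 - s * w 0\<bar>"
proof -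
  have "\<bar>w k\<bar> \<le> \<bar>w 0\<bar> * \<bar>chebyshev_T s k\<bar> + \<bar>w 1 - s * w 0\<bar> * \<bar>chebyshev_U s k\<bar>"
    unfolding chebyshev_recurrence_solution[of w s k, OF rec] by (metis abs_mult abs_triangle_ineq)
  also have "\<dots> \<le> \<bar>w 0\<bar> * 1 + \<bar>w 1 - s * w 0\<bar> * real k"
    by (intro add_mono mult_left_mono abs_chebyshev_T_le abs_chebyshev_U_le s) auto
  finally show ?thesis by (simp add: mult.commute)
qed

lemma linear_recurrence_solution:
  assumes rec: "\<And>k. w (Suc (Suc k)) = 2 * w (Suc k) - w k"
  shows "w k = w 0 + real k * (w 1 - w 0)"
proof -
  have "w k - (w 0 + real k * (w 1 - w 0)) = 0"
    by (rule chebyshev_recurrence_zero[where w = "\<lambda>k. w k - (w 0 + real k * (w 1 - w 0))" and s = 1])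
      (simp_all add: rec algebra_simps)
  then show ?thesis by simp
qed

lemma hb2_residual_two_step:
  "hb_residual [ga, gb] m l (t + 4) =
     ((1 + m - ga * l) * (1 + m - gb * l) - 2 * m) * hb_residual [ga, gb] m l (t + 2)
       - m\<^sup>2 * hb_residual [ga, gb] m l t"
proof -
  let ?P = "hb_residual [ga, gb] m l"
  define c where "c n = 1 + m - [ga, gb] ! (Suc n mod 2) * l" for n
  have c_period: "c (t + 2) = c t"
    unfolding c_def by simp
  have c_prod: "c t * c (t + 1) = (1 + m - ga * l) * (1 + m - gb * l)"
    unfolding c_def by (cases "even t") (auto simp: mod_Suc even_iff_mod_2_eq_zero odd_iff_mod_2_eq_one)
  have r4: "?P (t + 4) = c (t + 2) * ?P (t + 3) - m * ?P (t + 2)"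
    unfolding c_def by (simp add: numeral_eq_Suc)
  have r3: "?P (t + 3) = c (t + 1) * ?P (t + 2) - m * ?P (t + 1)"
    unfolding c_def by (simp add: numeral_eq_Suc)
  have "?P (t + 2) = c t * ?P (t + 1) - m * ?P t"
    unfolding c_def by (simp add: numeral_eq_Suc)
  then have r2: "c t * ?P (t + 1) = ?P (t + 2) + m * ?P t"
    by linarith
  have "?P (t + 4) = c t * c (t + 1) * ?P (t + 2) - m * (c t * ?P (t + 1)) - m * ?P (t + 2)"
    unfolding r4 r3 c_period by (simp add: algebra_simps)
  then show ?thesis
    unfolding r2 c_prod by (simp add: algebra_simps power2_eq_square)
qed

lemma two_step_recurrence_scaled:
  fixes P :: "nat \<Rightarrow> real" and j :: nat
  assumes m: "m \<noteq> 0" and rec: "\<And>t. P (t + 4) = a * P (t + 2) - m\<^sup>2 * P t"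
  defines "w \<equiv> \<lambda>k. P (2 * k + j) / m ^ k"
  shows "w (Suc (Suc k)) = 2 * (a / (2 * m)) * w (Suc k) - w k"
proof -
  have idx: "2 * Suc (Suc k) + j = (2 * k + j) + 4" "2 * Suc k + j = (2 * k + j) + 2"
    by simp_all
  show ?thesis
    unfolding w_def idx rec using m by (simp add: field_simps power2_eq_square)
qed

lemma hb2_residual_bound:
  fixes ga gb m l :: real
  assumes m: "0 < m"
  defines "s \<equiv> ((1 + m - ga * l) * (1 + m - gb * l) - 2 * m) / (2 * m)"
  assumes s: "\<bar>s\<bar> \<le> 1"
  shows "\<bar>hb_residual [ga, gb] m l (2 * k + j)\<bar>
    \<le> m ^ k * (\<bar>hb_residual [ga, gb] m l j\<bar>
        + real k * \<bar>hb_residual [ga, gb] m l (j + 2) / m - s * hb_residual [ga, gb] m l j\<bar>)"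
proof -
  define w where "w k = hb_residual [ga, gb] m l (2 * k + j) / m ^ k" for k
  have "w (Suc (Suc k)) = 2 * s * w (Suc k) - w k" for k
    unfolding w_def s_def using m by (intro two_step_recurrence_scaled hb2_residual_two_step) simp
  then have "\<bar>w k\<bar> \<le> \<bar>w 0\<bar> + real k * \<bar>w 1 - s * w 0\<bar>"
    using s by (rule chebyshev_recurrence_bound)
  then show ?thesis
    using m by (simp add: w_def abs_mult divide_le_eq add.commute mult.commute)
qed

lemma hb2_residual_boundary:
  fixes ga gb m l :: real
  assumes m: "m \<noteq> 0" and s: "(1 + m - ga * l) * (1 + m - gb * l) = 4 * m"
  shows "hb_residual [ga, gb] m l (2 * k + j)
    = m ^ k * (hb_residual [ga, gb] m l j
        + real k * (hb_residual [ga, gb] m l (j + 2) / m - hb_residual [ga, gb] m l j))"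
proof -
  define w where "w k = hb_residual [ga, gb] m l (2 * k + j) / m ^ k" for k
  have "w (Suc (Suc k)) = 2 * ((4 * m - 2 * m) / (2 * m)) * w (Suc k) - w k" for k
    unfolding w_def s[symmetric] using m by (intro two_step_recurrence_scaled hb2_residual_two_step)
  then have "w (Suc (Suc k)) = 2 * w (Suc k) - w k" for k
    using m by simp
  then have "w k = w 0 + real k * (w 1 - w 0)"
    by (rule linear_recurrence_solution)
  then show ?thesis
    using m by (simp add: w_def add.commute field_simps)
qed

lemma hb2_residual_even_coefficient:
  fixes ga gb m l :: real
  assumes "m \<noteq> 0" "1 + m \<noteq> 0"
  defines "p \<equiv> (1 + m - ga * l) * (1 + m - gb * l)"
  shows "hb_residual [ga, gb] m l (0 + 2) / m - (p - 2 * m) / (2 * m) * hb_residual [ga, gb] m l 0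
    = p / (2 * m) * ((1 - m) / (1 + m))"
proof -
  have "hb_residual [ga, gb] m l 1 = (1 + m - ga * l) / (1 + m)"
    using assms(2) by (simp add: field_simps)
  then have "hb_residual [ga, gb] m l (0 + 2) = p / (1 + m) - m"
    unfolding p_def by (simp add: numeral_2_eq_2 mult.commute)
  moreover define y where "y = p / (1 + m)"
  have "(y - m) / m - (y * (1 + m) - 2 * m) / (2 * m) = y * (1 - m) / (2 * m)"
    using assms(1) by (simp add: field_simps)
  moreover have "y * (1 + m) = p"
    unfolding y_def using assms(2) by simp
  ultimately show ?thesis
    unfolding y_def by simp
qed

section \<open>Root asymptotics\<close>

lemma powr_root_power:
  assumes "0 < q" "0 < t"
  shows "(q ^ t) powr (1 / real t) = q"
  using assms by (simp add: powr_realpow[symmetric] powr_powr)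

lemma limsup_root_le:
  fixes r :: "nat \<Rightarrow> real"
  assumes q: "0 < q" and K: "0 < K" and upper: "\<And>t. 0 \<le> r t \<and> r t \<le> K * (real t + 1) * q ^ t"
  shows "limsup (\<lambda>t. ereal (r t powr (1 / real t))) \<le> ereal q"
proof -
  have "\<forall>\<^sub>F t in sequentially. ereal (r t powr (1 / real t))
          \<le> ereal ((K * (real t + 1)) powr (1 / real t) * q)"
    using eventually_gt_at_top[of 0]
  proof eventually_elim
    case (elim t)
    have "r t powr (1 / real t) \<le> (K * (real t + 1) * q ^ t) powr (1 / real t)"
      using upper[of t] by (intro powr_mono2) auto
    also have "\<dots> = (K * (real t + 1)) powr (1 / real t) * q"
      using K q powr_root_power[OF q elim] by (simp add: powr_mult)
    finally show ?case by simp
  qed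
  then have "limsup (\<lambda>t. ereal (r t powr (1 / real t)))
      \<le> limsup (\<lambda>t. ereal ((K * (real t + 1)) powr (1 / real t) * q))"
    by (rule Limsup_mono)
  also have "\<dots> = ereal q"
  proof (rule lim_imp_Limsup)
    have "(\<lambda>t. (K * (real t + 1)) powr (1 / real t)) \<longlonglongrightarrow> 1"
      using K by real_asymp
    then show "(\<lambda>t. ereal ((K * (real t + 1)) powr (1 / real t) * q)) \<longlonglongrightarrow> ereal q"
      using tendsto_mult_right[of _ 1 sequentially q] by (auto intro: tendsto_ereal)
  qed simp
  finally show ?thesis .
qed

lemma limsup_root_ge:
  fixes r :: "nat \<Rightarrow> real"
  assumes q: "0 < q" and lower: "\<And>t. even t \<Longrightarrow> q ^ t \<le> r t"
  shows "ereal q \<le> limsup (\<lambda>t. ereal (r t powr (1 / real t)))"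
proof -
  have "q \<le> r (2 * k + 2) powr (1 / real (2 * k + 2))" for k
  proof -
    have "q = (q ^ (2 * k + 2)) powr (1 / real (2 * k + 2))"
      using powr_root_power[OF q, of "2 * k + 2"] by simp
    also have "\<dots> \<le> r (2 * k + 2) powr (1 / real (2 * k + 2))"
      using lower[of "2 * k + 2"] q by (intro powr_mono2) auto
    finally show ?thesis .
  qed
  then have "ereal q \<le> limsup ((\<lambda>t. ereal (r t powr (1 / real t))) \<circ> (\<lambda>k. 2 * k + 2))"
    by (intro le_Limsup) auto
  also have "\<dots> \<le> limsup (\<lambda>t. ereal (r t powr (1 / real t)))"
    by (rule limsup_subseq_mono) (auto intro: strict_monoI)
  finally show ?thesis .
qed

section \<open>The tuned method on two intervals\<close>

lemma momentum_identities:
  fixes A B :: real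
  assumes B: "0 < B" and BA: "B < A"
  defines "q \<equiv> (A - B) / sqrt (A\<^sup>2 - B\<^sup>2)"
  shows "0 < q" "q < 1" "(1 + q\<^sup>2)\<^sup>2 * (A\<^sup>2 - B\<^sup>2) = 4 * q\<^sup>2 * A\<^sup>2"
    "(1 - q\<^sup>2) / (1 + q\<^sup>2) = B / A"
proof -
  have A: "0 < A" using B BA by linarith
  have diff: "A\<^sup>2 - B\<^sup>2 = (A - B) * (A + B)"
    by (simp add: power2_eq_square algebra_simps)
  have pos: "0 < A\<^sup>2 - B\<^sup>2" unfolding diff using B BA by simp
  have q2: "q\<^sup>2 = (A - B) / (A + B)"
    unfolding q_def power_divide real_sqrt_pow2[OF less_imp_le[OF pos]] diff
    using B BA by (simp add: power2_eq_square)
  show "0 < q" unfolding q_def using BA pos by simp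
  moreover have "q\<^sup>2 < 1" unfolding q2 using B BA by simp
  ultimately show "q < 1" by (simp add: power_less_one_iff)
  have one_plus: "1 + q\<^sup>2 = 2 * A / (A + B)" and one_minus: "1 - q\<^sup>2 = 2 * B / (A + B)"
    unfolding q2 using A B by (simp_all add: field_simps)
  have "(1 - q\<^sup>2) * A = B * (1 + q\<^sup>2)"
    unfolding one_plus one_minus by (simp add: ac_simps)
  moreover have "1 + q\<^sup>2 \<noteq> 0" "A \<noteq> 0"
    using A by (simp_all add: add_pos_nonneg[of 1 "q\<^sup>2", THEN less_imp_neq, symmetric])
  ultimately show "(1 - q\<^sup>2) / (1 + q\<^sup>2) = B / A"
    by (simp add: frac_eq_eq)
  have "(1 + q\<^sup>2)\<^sup>2 * (A\<^sup>2 - B\<^sup>2) = 4 * A\<^sup>2 * (A - B) * (A + B) / (A + B)\<^sup>2"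
    unfolding one_plus diff by (simp add: power_divide power_mult_distrib)
  also have "\<dots> = 4 * A\<^sup>2 * (A - B) / (A + B)"
    using A B by (simp add: power2_eq_square)
  also have "\<dots> = 4 * q\<^sup>2 * A\<^sup>2"
    unfolding q2 by simp
  finally show "(1 + q\<^sup>2)\<^sup>2 * (A\<^sup>2 - B\<^sup>2) = 4 * q\<^sup>2 * A\<^sup>2" .
qed

lemma two_interval_parameters:
  fixes mu1 L1 mu2 L2 :: real
  assumes a: "0 < mu1" "mu1 < L1" "L1 \<le> mu2" "mu2 < L2" "L1 - mu1 = L2 - mu2"
  defines "rho \<equiv> (L2 + mu1) / (L2 - mu1)" and "R \<equiv> (mu2 - L1) / (L2 - mu1)"
  defines "q \<equiv> (sqrt (rho\<^sup>2 - R\<^sup>2) - sqrt (rho\<^sup>2 - 1)) / sqrt (1 - R\<^sup>2)"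
  shows "0 < q" "q < 1"
    "(1 + q\<^sup>2)\<^sup>2 * ((L1 - mu1) * (mu2 - mu1)) = 4 * q\<^sup>2 * (L1 * mu2)"
    "sqrt ((rho\<^sup>2 - 1) / (rho\<^sup>2 - R\<^sup>2)) = (1 - q\<^sup>2) / (1 + q\<^sup>2)"
proof -
  define D where "D = L2 - mu1"
  have D: "0 < D" unfolding D_def using a by simp
  have L2: "L2 = mu2 + L1 - mu1" using a by simp
  have sq: "rho\<^sup>2 = (L2 + mu1)\<^sup>2 / D\<^sup>2" "R\<^sup>2 = (mu2 - L1)\<^sup>2 / D\<^sup>2" "1 = D\<^sup>2 / D\<^sup>2"
    unfolding rho_def R_def D_def using D[unfolded D_def] by (simp_all add: power_divide)
  have AA: "rho\<^sup>2 - R\<^sup>2 = 4 * (L1 * mu2) / D\<^sup>2"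
    unfolding sq(1,2) diff_divide_distrib[symmetric] L2 by (simp add: power2_eq_square algebra_simps)
  have BB: "rho\<^sup>2 - 1 = 4 * (L2 * mu1) / D\<^sup>2"
    unfolding sq(1) by (subst sq(3), unfold diff_divide_distrib[symmetric] D_def)
      (simp add: power2_eq_square algebra_simps)
  have CC: "1 - R\<^sup>2 = 4 * ((L1 - mu1) * (mu2 - mu1)) / D\<^sup>2"
    unfolding sq(2) by (subst sq(3), unfold diff_divide_distrib[symmetric] D_def L2)
      (simp add: power2_eq_square algebra_simps)
  define A where "A = sqrt (rho\<^sup>2 - R\<^sup>2)"
  define B where "B = sqrt (rho\<^sup>2 - 1)"
  have A2: "A\<^sup>2 = rho\<^sup>2 - R\<^sup>2" and B2: "B\<^sup>2 = rho\<^sup>2 - 1"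
    unfolding A_def B_def AA BB using a D by simp_all
  have B: "0 < B" unfolding B_def BB using a D by simp
  have "0 < 1 - R\<^sup>2"
    unfolding CC using a D by (auto intro!: divide_pos_pos mult_pos_pos)
  then have BA: "B < A"
    unfolding A_def B_def by (intro real_sqrt_less_mono) simp
  have "A\<^sup>2 - B\<^sup>2 = 1 - R\<^sup>2"
    unfolding A2 B2 by simp
  then have q: "q = (A - B) / sqrt (A\<^sup>2 - B\<^sup>2)"
    unfolding q_def A_def B_def by simp
  note M = momentum_identities[OF B BA, folded q]
  show "0 < q" "q < 1" by (fact M(1), fact M(2))
  have "(1 + q\<^sup>2)\<^sup>2 * (4 * ((L1 - mu1) * (mu2 - mu1)) / D\<^sup>2) = 4 * q\<^sup>2 * (4 * (L1 * mu2) / D\<^sup>2)"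
    using M(3) unfolding A2 B2 AA[symmetric] CC[symmetric] by simp
  then show "(1 + q\<^sup>2)\<^sup>2 * ((L1 - mu1) * (mu2 - mu1)) = 4 * q\<^sup>2 * (L1 * mu2)"
    using D by (simp add: field_simps)
  show "sqrt ((rho\<^sup>2 - 1) / (rho\<^sup>2 - R\<^sup>2)) = (1 - q\<^sup>2) / (1 + q\<^sup>2)"
    unfolding M(4) A_def B_def by (simp add: real_sqrt_divide)
qed

locale tuned_hb2 =
  fixes mu1 L1 mu2 L2 q m ga gb :: real
  assumes intervals: "0 < mu1" "mu1 < L1" "L1 \<le> mu2" "mu2 < L2" "L1 - mu1 = L2 - mu2"
    and q: "0 < q" "q < 1" and m_q: "m = q\<^sup>2"
    and tuned: "(1 + m)\<^sup>2 * ((L1 - mu1) * (mu2 - mu1)) = 4 * m * (L1 * mu2)"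
    and steps: "{ga, gb} = {(1 + m) / L1, (1 + m) / mu2}"
begin

definition Lam :: "real set" where
  "Lam = {mu1..L1} \<union> {mu2..L2}"

lemma momentum_bounds: "0 < m" "m < 1"
  using q unfolding m_q by (simp_all add: power_less_one_iff)

lemma tuned_scaled: "(1 + m)\<^sup>2 / (L1 * mu2) * ((L1 - mu1) * (mu2 - mu1)) = 4 * m"
proof -
  have "L1 * mu2 \<noteq> 0" using intervals by simp
  then show ?thesis unfolding times_divide_eq_left tuned by simp
qed

lemma step_factor_product:
  "(1 + m - ga * l) * (1 + m - gb * l) = (1 + m)\<^sup>2 / (L1 * mu2) * ((L1 - l) * (mu2 - l))"
proof -
  have "L1 \<noteq> 0" "mu2 \<noteq> 0" using intervals by auto
  then have "(1 + m - (1 + m) / L1 * l) * (1 + m - (1 + m) / mu2 * l)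
      = (1 + m)\<^sup>2 / (L1 * mu2) * ((L1 - l) * (mu2 - l))"
    by (simp add: field_simps power2_eq_square)
  then show ?thesis
    using steps unfolding doubleton_eq_iff by (auto simp: mult.commute)
qed

lemma gap_product_bounds:
  assumes l: "l \<in> Lam"
  shows "0 \<le> (L1 - l) * (mu2 - l)" "(L1 - l) * (mu2 - l) \<le> (L1 - mu1) * (mu2 - mu1)"
proof -
  consider "mu1 \<le> l" "l \<le> L1" | "mu2 \<le> l" "l \<le> L2"
    using l unfolding Lam_def by auto
  then have "0 \<le> (L1 - l) * (mu2 - l) \<and> (L1 - l) * (mu2 - l) \<le> (L1 - mu1) * (mu2 - mu1)"
  proof cases
    case 1
    have "(L1 - l) * (mu2 - l) \<le> (L1 - mu1) * (mu2 - l)"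
      using 1 intervals by (intro mult_right_mono) auto
    also have "\<dots> \<le> (L1 - mu1) * (mu2 - mu1)"
      using 1 intervals by (intro mult_left_mono) auto
    finally show ?thesis using 1 intervals by auto
  next
    case 2
    have flip: "(L1 - l) * (mu2 - l) = (l - L1) * (l - mu2)"
      by (simp add: algebra_simps)
    have "(l - L1) * (l - mu2) \<le> (L2 - L1) * (L2 - mu2)"
      using 2 intervals by (intro mult_mono) auto
    also have "\<dots> = (L1 - mu1) * (mu2 - mu1)"
    proof -
      have "L2 - L1 = mu2 - mu1" "L2 - mu2 = L1 - mu1" using intervals(5) by linarith+
      then show ?thesis by (simp add: mult.commute)
    qed
    finally show ?thesis
      unfolding flip using 2 intervals by simp
  qed
  then show "0 \<le> (L1 - l) * (mu2 - l)" "(L1 - l) * (mu2 - l) \<le> (L1 - mu1) * (mu2 - mu1)"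
    by auto
qed

lemma step_factor_bounds:
  assumes l: "l \<in> Lam"
  shows "0 \<le> (1 + m - ga * l) * (1 + m - gb * l)" "(1 + m - ga * l) * (1 + m - gb * l) \<le> 4 * m"
proof -
  have scale: "0 \<le> (1 + m)\<^sup>2 / (L1 * mu2)"
    using intervals by simp
  show "0 \<le> (1 + m - ga * l) * (1 + m - gb * l)"
    unfolding step_factor_product by (rule mult_nonneg_nonneg[OF scale gap_product_bounds(1)[OF l]])
  have "(1 + m)\<^sup>2 / (L1 * mu2) * ((L1 - l) * (mu2 - l))
      \<le> (1 + m)\<^sup>2 / (L1 * mu2) * ((L1 - mu1) * (mu2 - mu1))"
    using scale gap_product_bounds(2)[OF l] by (rule mult_left_mono[rotated])
  also have "\<dots> = 4 * m"
    by (rule tuned_scaled)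
  finally show "(1 + m - ga * l) * (1 + m - gb * l) \<le> 4 * m"
    unfolding step_factor_product .
qed

lemma step_factor_mu1: "(1 + m - ga * mu1) * (1 + m - gb * mu1) = 4 * m"
  unfolding step_factor_product by (rule tuned_scaled)

lemma step_parameter_bound:
  assumes l: "l \<in> Lam"
  shows "\<bar>((1 + m - ga * l) * (1 + m - gb * l) - 2 * m) / (2 * m)\<bar> \<le> 1"
  using step_factor_bounds[OF l] momentum_bounds by (simp add: abs_le_iff field_simps)

lemma residual_even_le:
  assumes l: "l \<in> Lam"
  shows "\<bar>hb_residual [ga, gb] m l (2 * k)\<bar> \<le> m ^ k * (1 + 2 * real k * ((1 - m) / (1 + m)))"
proof -
  define p where "p = (1 + m - ga * l) * (1 + m - gb * l)"
  have p: "0 \<le> p" "p \<le> 4 * m"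
    unfolding p_def using step_factor_bounds[OF l] by auto
  have c: "0 \<le> (1 - m) / (1 + m)"
    using momentum_bounds by simp
  have s: "\<bar>(p - 2 * m) / (2 * m)\<bar> \<le> 1"
    unfolding p_def by (rule step_parameter_bound[OF l])
  have coef: "hb_residual [ga, gb] m l (0 + 2) / m - (p - 2 * m) / (2 * m) * hb_residual [ga, gb] m l 0
      = p / (2 * m) * ((1 - m) / (1 + m))"
    unfolding p_def by (rule hb2_residual_even_coefficient) (use momentum_bounds in auto)
  have "\<bar>hb_residual [ga, gb] m l (2 * k + 0)\<bar>
      \<le> m ^ k * (\<bar>hb_residual [ga, gb] m l 0\<bar> + real k *
          \<bar>hb_residual [ga, gb] m l (0 + 2) / m - (p - 2 * m) / (2 * m) * hb_residual [ga, gb] m l 0\<bar>)"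
    unfolding p_def by (rule hb2_residual_bound) (use momentum_bounds s[unfolded p_def] in auto)
  then have "\<bar>hb_residual [ga, gb] m l (2 * k)\<bar>
      \<le> m ^ k * (1 + real k * \<bar>p / (2 * m) * ((1 - m) / (1 + m))\<bar>)"
    unfolding coef by simp
  also have "\<dots> \<le> m ^ k * (1 + 2 * real k * ((1 - m) / (1 + m)))"
  proof -
    have h: "0 \<le> p / (2 * m)" "p / (2 * m) \<le> 2"
      using p momentum_bounds by (simp_all add: divide_le_eq)
    have "\<bar>p / (2 * m) * ((1 - m) / (1 + m))\<bar> \<le> 2 * ((1 - m) / (1 + m))"
      using abs_of_nonneg[OF mult_nonneg_nonneg[OF h(1) c]] mult_right_mono[OF h(2) c] by linarith
    then have "real k * \<bar>p / (2 * m) * ((1 - m) / (1 + m))\<bar> \<le> real k * (2 * ((1 - m) / (1 + m)))"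
      by (rule mult_left_mono) simp
    then show ?thesis
      using momentum_bounds by (intro mult_left_mono) (simp_all add: ac_simps)
  qed
  finally show ?thesis .
qed

lemma residual_even_mu1:
  "hb_residual [ga, gb] m mu1 (2 * k) = m ^ k * (1 + 2 * real k * ((1 - m) / (1 + m)))"
proof -
  have "hb_residual [ga, gb] m mu1 (0 + 2) / m - hb_residual [ga, gb] m mu1 0
      = 2 * ((1 - m) / (1 + m))"
    using hb2_residual_even_coefficient[where ga = ga and gb = gb and m = m and l = mu1,
        unfolded step_factor_mu1] momentum_bounds by simp
  moreover have "hb_residual [ga, gb] m mu1 (2 * k + 0) = m ^ k * (hb_residual [ga, gb] m mu1 0
      + real k * (hb_residual [ga, gb] m mu1 (0 + 2) / m - hb_residual [ga, gb] m mu1 0))"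
    using momentum_bounds by (intro hb2_residual_boundary step_factor_mu1) simp
  ultimately show ?thesis
    by simp
qed

lemma residual_le_scaled:
  assumes l: "l \<in> Lam"
  shows "\<bar>hb_residual [ga, gb] m l (2 * k + j)\<bar>
    \<le> (real k + 1) * m ^ k * (\<bar>hb_residual [ga, gb] m l j\<bar> + \<bar>hb_residual [ga, gb] m l (j + 2)\<bar> / m)"
proof -
  let ?P = "hb_residual [ga, gb] m l"
  define s where "s = ((1 + m - ga * l) * (1 + m - gb * l) - 2 * m) / (2 * m)"
  have s: "\<bar>s\<bar> \<le> 1"
    unfolding s_def by (rule step_parameter_bound[OF l])
  have "\<bar>?P (2 * k + j)\<bar> \<le> m ^ k * (\<bar>?P j\<bar> + real k * \<bar>?P (j + 2) / m - s * ?P j\<bar>)"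
    unfolding s_def by (rule hb2_residual_bound) (use momentum_bounds s[unfolded s_def] in auto)
  also have "\<dots> \<le> m ^ k * (\<bar>?P j\<bar> + real k * (\<bar>?P (j + 2)\<bar> / m + \<bar>?P j\<bar>))"
  proof -
    have "\<bar>s * ?P j\<bar> \<le> \<bar>?P j\<bar>"
      using s by (simp add: abs_mult mult_left_le_one_le)
    then have "\<bar>?P (j + 2) / m - s * ?P j\<bar> \<le> \<bar>?P (j + 2)\<bar> / m + \<bar>?P j\<bar>"
      using abs_triangle_ineq4[of "?P (j + 2) / m" "s * ?P j"] momentum_bounds by simp
    then show ?thesis
      using momentum_bounds by (intro mult_left_mono add_left_mono) simp_all
  qed
  also have "\<dots> \<le> (real k + 1) * m ^ k * (\<bar>?P j\<bar> + \<bar>?P (j + 2)\<bar> / m)"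
  proof -
    have "m ^ k * (X + real k * (Y + X)) \<le> (real k + 1) * m ^ k * (X + Y)" if "0 \<le> Y" for X Y :: real
      using mult_nonneg_nonneg[OF zero_le_power[of m k] that] momentum_bounds by (simp add: algebra_simps)
    then show ?thesis
      using momentum_bounds by simp
  qed
  finally show ?thesis .
qed

lemma Lam_subset: "Lam \<subseteq> {mu1..L2}"
  unfolding Lam_def using intervals by auto

lemma mu1_in_Lam: "mu1 \<in> Lam"
  unfolding Lam_def using intervals by simp

lemma residual_bounded:
  obtains M where "\<And>j l. l \<in> Lam \<Longrightarrow> \<bar>hb_residual [ga, gb] m l j\<bar> \<le> M j"
proof -
  have "\<forall>j. \<exists>M. \<forall>l\<in>{mu1..L2}. \<bar>hb_residual [ga, gb] m l j\<bar> \<le> M"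
  proof
    fix j
    have "{mu1..L2} \<noteq> {}" using intervals by simp
    then obtain x where "\<forall>l\<in>{mu1..L2}. \<bar>hb_residual [ga, gb] m l j\<bar> \<le> \<bar>hb_residual [ga, gb] m x j\<bar>"
      using continuous_attains_sup[OF compact_Icc _ continuous_on_rabs[OF continuous_hb_residual]] by blast
    then show "\<exists>M. \<forall>l\<in>{mu1..L2}. \<bar>hb_residual [ga, gb] m l j\<bar> \<le> M" ..
  qed
  then obtain M where "\<forall>j. \<forall>l\<in>{mu1..L2}. \<bar>hb_residual [ga, gb] m l j\<bar> \<le> M j"
    by (rule choice[THEN exE])
  then show thesis
    using that Lam_subset by blast
qed

lemma residual_initial_bound:
  obtains C where "1 \<le> C"
    "\<And>l (j :: nat). l \<in> Lam \<Longrightarrow> j < 2 \<Longrightarrow>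
       \<bar>hb_residual [ga, gb] m l j\<bar> + \<bar>hb_residual [ga, gb] m l (j + 2)\<bar> / m \<le> C"
proof -
  obtain M where M: "\<And>j l. l \<in> Lam \<Longrightarrow> \<bar>hb_residual [ga, gb] m l j\<bar> \<le> M j"
    using residual_bounded by blast
  have M_nonneg: "0 \<le> M j" for j
    using M[OF mu1_in_Lam, of j] by linarith
  then have M_div: "0 \<le> M j / m" for j
    using momentum_bounds by simp
  define C where "C = M 0 + M 1 + (M 2 + M 3) / m"
  show ?thesis
  proof (rule that)
    show "1 \<le> C"
      using M[OF mu1_in_Lam, of 0] M_nonneg[of 1] M_div[of 2] M_div[of 3]
      unfolding C_def add_divide_distrib by simp
    fix l and j :: nat
    assume l: "l \<in> Lam" and j: "j < 2"
    have "M j + M (j + 2) / m \<le> C"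
      using j M_nonneg[of 0] M_nonneg[of 1] M_div[of 2] M_div[of 3]
      unfolding C_def add_divide_distrib by (cases j) (simp_all add: numeral_eq_Suc)
    moreover have "\<bar>hb_residual [ga, gb] m l (j + 2)\<bar> / m \<le> M (j + 2) / m"
      using M[OF l, of "j + 2"] momentum_bounds by (intro divide_right_mono) simp_all
    ultimately show "\<bar>hb_residual [ga, gb] m l j\<bar> + \<bar>hb_residual [ga, gb] m l (j + 2)\<bar> / m \<le> C"
      using M[OF l, of j] by linarith
  qed
qed

lemma residual_le_exponential:
  obtains K where "0 < K"
    "\<And>l t. l \<in> Lam \<Longrightarrow> \<bar>hb_residual [ga, gb] m l t\<bar> \<le> K * (real t + 1) * q ^ t"
proof -
  obtain C where C: "1 \<le> C"
    "\<And>l (j :: nat). l \<in> Lam \<Longrightarrow> j < 2 \<Longrightarrow>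
       \<bar>hb_residual [ga, gb] m l j\<bar> + \<bar>hb_residual [ga, gb] m l (j + 2)\<bar> / m \<le> C"
    using residual_initial_bound by blast
  show ?thesis
  proof (rule that)
    show "0 < C / q" using C(1) q by simp
    fix l and t :: nat
    assume l: "l \<in> Lam"
    define k j where "k = t div 2" and "j = t mod 2"
    have t: "t = 2 * k + j" and j: "j < 2"
      unfolding k_def j_def by simp_all
    have "(real k + 1) * m ^ k * (\<bar>hb_residual [ga, gb] m l j\<bar> + \<bar>hb_residual [ga, gb] m l (j + 2)\<bar> / m)
        \<le> (real k + 1) * m ^ k * C"
      using C(2)[OF l j] momentum_bounds by (intro mult_left_mono) simp_all
    then have "\<bar>hb_residual [ga, gb] m l t\<bar> \<le> (real k + 1) * m ^ k * C"
      using residual_le_scaled[OF l, of k j] unfolding t by linarith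
    also have "\<dots> \<le> (real t + 1) * (q ^ t / q) * C"
    proof (intro mult_right_mono mult_mono)
      have "q ^ (2 * k) * q \<le> q ^ t"
        unfolding t using j q by (cases j) (auto simp: power_add)
      moreover have "m ^ k = q ^ (2 * k)"
        unfolding m_q by (simp add: power_mult)
      ultimately show "m ^ k \<le> q ^ t / q"
        using q by (simp add: le_divide_eq)
    qed (use t q momentum_bounds C(1) in auto)
    finally show "\<bar>hb_residual [ga, gb] m l t\<bar> \<le> C / q * (real t + 1) * q ^ t"
      by (simp add: field_simps)
  qed
qed

theorem worst_rate_even:
  assumes "even t"
  shows "worst_rate Lam [ga, gb] m t = q ^ t * (1 + real t * ((1 - m) / (1 + m)))"
proof -
  obtain k where t: "t = 2 * k" using assms by blast
  have exact: "q ^ t * (1 + real t * ((1 - m) / (1 + m))) = m ^ k * (1 + 2 * real k * ((1 - m) / (1 + m)))"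
    unfolding t m_q by (simp add: power_mult)
  have bdd: "bdd_above ((\<lambda>l. \<bar>hb_residual [ga, gb] m l t\<bar>) ` Lam)"
    unfolding t using residual_even_le by (rule bdd_aboveI2)
  have "(SUP l\<in>Lam. \<bar>hb_residual [ga, gb] m l t\<bar>) = q ^ t * (1 + real t * ((1 - m) / (1 + m)))"
  proof (rule antisym)
    show "(SUP l\<in>Lam. \<bar>hb_residual [ga, gb] m l t\<bar>) \<le> q ^ t * (1 + real t * ((1 - m) / (1 + m)))"
      using residual_even_le mu1_in_Lam unfolding exact unfolding t by (intro cSUP_least) auto
    have "q ^ t * (1 + real t * ((1 - m) / (1 + m))) = \<bar>hb_residual [ga, gb] m mu1 t\<bar>"
      unfolding exact unfolding t residual_even_mu1 using momentum_bounds by simp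
    also have "\<dots> \<le> (SUP l\<in>Lam. \<bar>hb_residual [ga, gb] m l t\<bar>)"
      by (rule cSUP_upper[OF mu1_in_Lam bdd])
    finally show "q ^ t * (1 + real t * ((1 - m) / (1 + m))) \<le> (SUP l\<in>Lam. \<bar>hb_residual [ga, gb] m l t\<bar>)" .
  qed
  then show ?thesis
    using worst_rate_eq_SUP[OF _ bdd] mu1_in_Lam by auto
qed

theorem asym_rate_eq: "asym_rate Lam [ga, gb] m = ereal q"
proof -
  obtain K where K: "0 < K"
    "\<And>l t. l \<in> Lam \<Longrightarrow> \<bar>hb_residual [ga, gb] m l t\<bar> \<le> K * (real t + 1) * q ^ t"
    using residual_le_exponential by blast
  have bdd: "bdd_above ((\<lambda>l. \<bar>hb_residual [ga, gb] m l t\<bar>) ` Lam)" for t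
    using K(2) by (rule bdd_aboveI2)
  have rate: "worst_rate Lam [ga, gb] m t = (SUP l\<in>Lam. \<bar>hb_residual [ga, gb] m l t\<bar>)" for t
    using mu1_in_Lam bdd by (intro worst_rate_eq_SUP) auto
  have upper: "0 \<le> worst_rate Lam [ga, gb] m t \<and> worst_rate Lam [ga, gb] m t \<le> K * (real t + 1) * q ^ t"
    for t
  proof
    have "0 \<le> \<bar>hb_residual [ga, gb] m mu1 t\<bar>" by simp
    also have "\<dots> \<le> worst_rate Lam [ga, gb] m t"
      unfolding rate by (rule cSUP_upper[OF mu1_in_Lam bdd])
    finally show "0 \<le> worst_rate Lam [ga, gb] m t" .
    show "worst_rate Lam [ga, gb] m t \<le> K * (real t + 1) * q ^ t"
      unfolding rate using mu1_in_Lam K(2) by (intro cSUP_least) auto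
  qed
  have lower: "q ^ t \<le> worst_rate Lam [ga, gb] m t" if "even t" for t
    unfolding worst_rate_even[OF that] using q momentum_bounds by (simp add: mult_le_cancel_left1)
  show ?thesis
    unfolding asym_rate_def
    by (intro antisym limsup_root_le[OF q(1) K(1) upper] limsup_root_ge[OF q(1) lower])
qed

end

theorem corollary1:
  fixes mu1 L1 mu2 L2 :: real
  assumes "0 < mu1" "mu1 < L1" "L1 \<le> mu2" "mu2 < L2" "L1 - mu1 = L2 - mu2"
  defines "Lam \<equiv> {mu1..L1} \<union> {mu2..L2}"
      and "rho \<equiv> (L2 + mu1) / (L2 - mu1)"
      and "R \<equiv> (mu2 - L1) / (L2 - mu1)"
  defines "q \<equiv> (sqrt (rho^2 - R^2) - sqrt (rho^2 - 1)) / sqrt (1 - R^2)"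
  defines "m \<equiv> q^2"
  defines "h0 \<equiv> (1 + m) / L1" and "h1 \<equiv> (1 + m) / mu2"
  shows "(\<forall>t. even t \<longrightarrow>
            worst_rate Lam [h0, h1] m t = q ^ t * (1 + real t * sqrt ((rho^2 - 1) / (rho^2 - R^2))))
       \<and> (\<forall>t. even t \<longrightarrow>
            worst_rate Lam [h1, h0] m t = q ^ t * (1 + real t * sqrt ((rho^2 - 1) / (rho^2 - R^2))))
       \<and> asym_rate Lam [h0, h1] m = ereal q
       \<and> asym_rate Lam [h1, h0] m = ereal q"
proof -
  note params = two_interval_parameters[OF assms(1-5), folded rho_def R_def, folded q_def, folded m_def]
  have tuned: "tuned_hb2 mu1 L1 mu2 L2 q m ga gb" if "{ga, gb} = {h0, h1}" for ga gb
    using assms(1-5) params that unfolding tuned_hb2_def h0_def h1_def m_def by auto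
  interpret I: tuned_hb2 mu1 L1 mu2 L2 q m h0 h1 by (rule tuned) simp
  interpret J: tuned_hb2 mu1 L1 mu2 L2 q m h1 h0 by (rule tuned) auto
  have "I.Lam = Lam" "J.Lam = Lam"
    unfolding I.Lam_def J.Lam_def Lam_def by simp_all
  then show ?thesis
    unfolding params(4) using I.worst_rate_even J.worst_rate_even I.asym_rate_eq J.asym_rate_eq by simp
qed

end
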